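(* Let $q$ be a power of the prime $p$ and $n$ a positive integer. Let $h\in \mathbb{F}_q[x]$ and $f, k\in\mathbb{F}_{q^n}[x]$ with $k(\mathbb{F}_q)\subseteq \mathbb{F}_q^*$, and let $P(x)=f(\mathrm{Tr}_{q^n/q}(x))+k(\mathrm{Tr}_{q^n/q}(x))\cdot L_h(x)$. Then $P$ is a permutation polynomial of $\mathbb{F}_{q^n}$ if and only if: (1) $\gcd\left(h(x), \frac{x^n-1}{x-1}\right)=1$; and (2) $Q(x):=T_n[f](x)+k(x)\cdot h(1)\cdot x$ induces a permutation of $\mathbb{F}_q$. Moreover, in this case, if $R\in\mathbb{F}_q[x]$ induces the inverse permutation of $Q$ on $\mathbb{F}_q$, then the inverse of the permutation of $\mathbb{F}_{q^n}$ induced by $P$ is induced by $$P_0(x)=F(\mathrm{Tr}_{q^n/q}(x))+k(R(\mathrm{Tr}_{q^n/q}(x)))^{q-2}\cdot L_H(x),$$ where $H\in \mathbb{F}_q[x]$ and $F\in \mathbb{F}_{q^n}[x]$ are as follows: (i) if $p\mid n$: $H$ is the unique polynomial of degree at most $n-1$ with $h(x)H(x)\equiv 1\pmod{x^n-1}$ (such $H$ exists, since when $p\mid n$ condition (1) is equivalent to $\gcd(h(x),x^n-1)=1$), and $F$ is any polynomial with $F(x)\equiv -k(R(x))^{q-2}\cdot L_H(f(R(x)))\pmod{x^q-x}$; (ii) if $p\nmid n$: $H$ is the unique polynomial of degree at most $n-2$ with $h(x)H(x)\equiv 1\pmod{\frac{x^n-1}{x-1}}$, and $F$ is any polynomial with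 $F(x)\equiv M(R(x))\pmod{x^q-x}$, where $M(x)=-k(x)^{q-2}\cdot L_H(f(x))+x\cdot\frac{1-h(1)H(1)}{n}$.
   Context: For $u(x)=\sum_{i=0}^m a_i x^i\in\mathbb{F}_q[x]$, its linearized $q$-associate is $L_u(x)=\sum_{i=0}^m a_i x^{q^i}$. $\mathrm{Tr}_{q^n/q}(x)=x+x^q+\cdots+x^{q^{n-1}}$ is the trace polynomial. For $f(x)=\sum_{i=0}^d a_i x^i\in\mathbb{F}_{q^n}[x]$, define $T_n[f](x)=\sum_{i=0}^d \mathrm{Tr}_{q^n/q}(a_i)x^i\in\mathbb{F}_q[x]$. A permutation polynomial of a finite field is a polynomial inducing a bijection of it. *)

theory Defs
  imports "HOL-Computational_Algebra.Computational_Algebra"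
begin

definition Fq :: "nat \<Rightarrow> 'a::field set" where
  "Fq q = {x. x ^ q = x}"

definition coeffs_in :: "'a::zero set \<Rightarrow> 'a poly \<Rightarrow> bool" where
  "coeffs_in S u \<longleftrightarrow> (\<forall>i. coeff u i \<in> S)"

definition trace :: "nat \<Rightarrow> nat \<Rightarrow> 'a::field \<Rightarrow> 'a" where
  "trace q n x = (\<Sum>i<n. x ^ (q ^ i))"

definition trace_poly :: "nat \<Rightarrow> nat \<Rightarrow> 'a::field poly" where
  "trace_poly q n = (\<Sum>i<n. monom 1 (q ^ i))"

definition lin_assoc :: "nat \<Rightarrow> 'a::field poly \<Rightarrow> 'a poly" where
  "lin_assoc q u = (\<Sum>i\<le>degree u. monom (coeff u i) (q ^ i))"

definition Tn :: "nat \<Rightarrow> nat \<Rightarrow> 'a::field poly \<Rightarrow> 'a poly" where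
  "Tn q n f = (\<Sum>i\<le>degree f. monom (trace q n (coeff f i)) i)"

end

theory Submission
  imports Defs
begin

(*
  The trace is the linearized map of
  (x^n - 1)/(x - 1), and linearized maps of polynomials over F_q compose as the polynomials
  multiply; hence Tr(L_h(x)) = h(1) Tr(x) and Tr(P(x)) = Q(Tr(x)). So P is a bijection iff
  Q permutes F_q = Tr(F_{q^n}) and P is injective on every fibre of the trace, i.e. the
  F_q-linear maps Tr and L_h have no common nonzero zero. Since L_{x^n - 1} = 0 and Bezout
  identities can be found inside F_q[x], this happens iff h is coprime to (x^n - 1)/(x - 1).

  If h H = 1 + G (x^n - 1)/(x - 1), then L_H(L_h(x)) = x + G(1) Tr(x). Given y = P(x), the
  trace t = Tr(x) is recovered as R(Tr(y)), and x = k(t)^(q-2) (L_H(y) - L_H(f(t))) - G(1) t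
  because k(t)^(q-2) = k(t)^(-1) in F_q; this is P0(y). Here G(1) = 0 if H inverts h modulo
  x^n - 1, and G(1) = (h(1) H(1) - 1)/n if H inverts h modulo (x^n - 1)/(x - 1).
*)

section \<open>Linearized polynomials\<close>

abbreviation lin_map :: "nat \<Rightarrow> 'a::field poly \<Rightarrow> 'a \<Rightarrow> 'a" where
  "lin_map q u \<equiv> poly (lin_assoc q u)"

lemma lin_map_eq_sum:
  assumes "degree u \<le> K"
  shows "lin_map q u x = (\<Sum>i\<le>K. coeff u i * x ^ q ^ i)"
proof -
  have "lin_map q u x = (\<Sum>i\<le>degree u. coeff u i * x ^ q ^ i)"
    by (simp add: lin_assoc_def poly_sum poly_monom)
  also have "\<dots> = (\<Sum>i\<le>K. coeff u i * x ^ q ^ i)"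
    using assms by (intro sum.mono_neutral_left) (auto simp: coeff_eq_0)
  finally show ?thesis .
qed

lemma lin_map_0: "lin_map q 0 x = 0"
  by (simp add: lin_assoc_def)

lemma lin_map_add: "lin_map q (u + v) x = lin_map q u x + lin_map q v x"
proof -
  define K where "K = max (degree u) (degree v)"
  have "degree (u + v) \<le> K" unfolding K_def by (rule degree_add_le) auto
  then show ?thesis
    by (simp add: lin_map_eq_sum[of _ K] K_def sum.distrib distrib_right)
qed

lemma lin_map_smult: "lin_map q (smult c u) x = c * lin_map q u x"
  by (simp add: lin_map_eq_sum[of "smult c u" "degree u"] lin_map_eq_sum[of u "degree u"]
      sum_distrib_left mult.assoc)

lemma lin_map_diff: "lin_map q (u - v) x = lin_map q u x - lin_map q v x"
  using lin_map_add[of q v "u - v" x] by simp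

lemma lin_map_monom: "lin_map q (monom c k) x = c * x ^ q ^ k"
proof -
  have "lin_map q (monom c k) x = (\<Sum>i\<le>k. coeff (monom c k) i * x ^ q ^ i)"
    by (rule lin_map_eq_sum) (rule degree_monom_le)
  also have "\<dots> = (\<Sum>i\<le>k. if i = k then c * x ^ q ^ k else 0)"
    by (rule sum.cong) auto
  finally show ?thesis
    by simp
qed

lemma lin_map_1: "lin_map q 1 x = x"
  using lin_map_monom[of q 1 0 x] by simp

lemma lin_map_pCons: "lin_map q (pCons a u) x = a * x + lin_map q u (x ^ q)"
proof -
  have "lin_map q (pCons a u) x = (\<Sum>i\<le>Suc (degree u). coeff (pCons a u) i * x ^ q ^ i)"
    by (rule lin_map_eq_sum) (rule degree_pCons_le)
  also have "\<dots> = a * x + (\<Sum>i\<le>degree u. coeff u i * (x ^ q) ^ q ^ i)"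
    by (simp only: sum.atMost_Suc_shift) (simp add: power_mult)
  finally show ?thesis
    by (simp add: lin_map_eq_sum[of u "degree u"])
qed

lemma coeff_lin_assoc_power:
  assumes "q \<ge> 2"
  shows "coeff (lin_assoc q u) (q ^ i) = coeff u i"
proof -
  have "coeff (lin_assoc q u) (q ^ i) = (\<Sum>j\<le>degree u. if j = i then coeff u j else 0)"
    unfolding lin_assoc_def coeff_sum coeff_monom using assms by (intro sum.cong) auto
  also have "\<dots> = coeff u i"
    by (auto simp: coeff_eq_0)
  finally show ?thesis .
qed

lemma degree_lin_assoc_le:
  assumes "q > 0"
  shows "degree (lin_assoc q u) \<le> q ^ degree u"
  unfolding lin_assoc_def
proof (rule degree_sum_le)
  fix i
  assume "i \<in> {..degree u}"
  then have "q ^ i \<le> q ^ degree u"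
    using assms by (intro power_increasing) auto
  then show "degree (monom (coeff u i) (q ^ i)) \<le> q ^ degree u"
    using degree_monom_le order_trans by blast
qed simp

definition geom_poly :: "nat \<Rightarrow> 'a::comm_ring_1 poly" where
  "geom_poly n = (\<Sum>i<n. monom 1 i)"

lemma coeff_geom_poly: "coeff (geom_poly n) i = (if i < n then 1 else 0)"
  by (simp add: geom_poly_def coeff_sum)

lemma geom_poly_nonzero: "n > 0 \<Longrightarrow> geom_poly n \<noteq> 0"
  by (metis coeff_0 coeff_geom_poly zero_neq_one)

lemma degree_geom_poly: "n > 0 \<Longrightarrow> degree (geom_poly n :: 'a::comm_ring_1 poly) = n - 1"
  by (intro antisym degree_le le_degree) (auto simp: coeff_geom_poly)

lemma poly_geom_poly_1: "poly (geom_poly n) 1 = of_nat n"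
  by (simp add: geom_poly_def poly_sum poly_monom)

lemma monom_minus_one_eq: "monom 1 n - 1 = [:-1, 1:] * geom_poly n"
proof -
  have "[:-1, 1:] * geom_poly n = (\<Sum>i<n. monom 1 (Suc i) - monom 1 i)"
    by (simp add: geom_poly_def sum_distrib_left monom_Suc)
  also have "\<dots> = monom 1 n - monom 1 0"
    by (rule sum_lessThan_telescope)
  finally show ?thesis
    by (metis monom_eq_1)
qed

lemma monom_minus_one_div: "(monom 1 n - 1) div [:-1, 1:] = (geom_poly n :: 'a::field poly)"
  unfolding monom_minus_one_eq by (rule nonzero_mult_div_cancel_left) simp

lemma degree_monom_minus_one: "n > 0 \<Longrightarrow> degree (monom 1 n - 1 :: 'a::comm_ring_1 poly) = n"
  by (intro antisym degree_le le_degree) auto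

lemma lin_map_geom_poly: "lin_map q (geom_poly n) x = trace q n x"
  by (induction n) (simp_all add: geom_poly_def trace_def lin_map_add lin_map_monom lin_map_0)

lemma poly_trace_poly: "poly (trace_poly q n) x = trace q n x"
  by (simp add: trace_poly_def trace_def poly_sum poly_monom)

section \<open>The subfield \<open>F\<^sub>q\<close> and the ring \<open>F\<^sub>q[x]\<close>\<close>

lemma Fq_power_q_power: "c \<in> Fq q \<Longrightarrow> c ^ q ^ i = c"
  by (induction i) (simp_all add: Fq_def power_mult flip: power_Suc2)

lemma lin_map_Fq: "c \<in> Fq q \<Longrightarrow> lin_map q u c = poly u 1 * c"
  by (subst lin_map_eq_sum[OF order.refl]) (simp add: Fq_power_q_power poly_altdef sum_distrib_right)

lemma Fq_1: "1 \<in> Fq q"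
  by (simp add: Fq_def)

lemma Fq_mult: "a \<in> Fq q \<Longrightarrow> b \<in> Fq q \<Longrightarrow> a * b \<in> Fq q"
  by (simp add: Fq_def power_mult_distrib)

lemma Fq_power:
  assumes "a \<in> Fq q"
  shows "a ^ k \<in> Fq q"
proof -
  have "(a ^ k) ^ q = (a ^ q) ^ k"
    by (simp only: mult.commute flip: power_mult)
  with assms show ?thesis
    by (simp add: Fq_def)
qed

lemma Fq_inverse: "a \<in> Fq q \<Longrightarrow> inverse a \<in> Fq q"
  by (simp add: Fq_def power_inverse)

lemma Fq_divide: "a \<in> Fq q \<Longrightarrow> b \<in> Fq q \<Longrightarrow> a / b \<in> Fq q"
  by (simp add: Fq_def power_divide)

lemma Fq_power_q_minus_2:
  assumes "c \<in> Fq q" "c \<noteq> 0" "q \<ge> 2"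
  shows "c ^ (q - 2) * c = 1"
proof -
  obtain r where "q = r + 2"
    using \<open>q \<ge> 2\<close> by (metis le_add_diff_inverse2)
  then have "c ^ (q - 2) * c * c = c ^ q"
    by (simp add: power_add power2_eq_square mult.assoc)
  also have "\<dots> = c"
    using assms by (simp add: Fq_def)
  finally show ?thesis
    using \<open>c \<noteq> 0\<close> by simp
qed

lemma poly_eq_on_Fq_if_dvd:
  assumes "(monom 1 q - [:0, 1:]) dvd (F - G)" "s \<in> Fq q"
  shows "poly F s = poly G s"
proof -
  obtain r where "F - G = (monom 1 q - [:0, 1:]) * r"
    using assms(1) by (elim dvdE)
  then have "poly (F - G) s = (s ^ q - s) * poly r s"
    by (simp add: poly_monom)
  with assms(2) show ?thesis
    by (simp add: Fq_def)
qed

(* Translation by 1 permutes the field, so card UNIV * 1 = 0. *)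
lemma CHAR_finite_field:
  assumes "prime p" "card (UNIV :: 'a::{field,finite} set) = p ^ k"
  shows "CHAR('a) = p"
proof -
  have "(\<Sum>y\<in>UNIV. 1 + y) = (\<Sum>y\<in>UNIV. y :: 'a)"
    by (rule sum.reindex_bij_witness[of _ "\<lambda>y. y - 1" "\<lambda>y. 1 + y"]) auto
  then have "of_nat (p ^ k) = (0 :: 'a)"
    by (simp add: sum.distrib assms(2))
  then have "CHAR('a) dvd p ^ k"
    using of_nat_eq_0_iff_char_dvd by blast
  moreover have "prime CHAR('a)"
    by (simp add: finite_imp_CHAR_pos prime_CHAR_semidom)
  ultimately have "CHAR('a) dvd p"
    by (metis prime_dvd_power)
  with \<open>prime CHAR('a)\<close> show ?thesis
    using assms(1) by (simp add: primes_dvd_imp_eq)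
qed

lemma bezout_mult_right:
  fixes h :: "'a::comm_ring_1"
  assumes "a1 * h + b1 * g1 = 1" "a2 * h + b2 * g2 = 1"
  shows "(a1 * a2 * h + a1 * b2 * g2 + a2 * b1 * g1) * h + (b1 * b2) * (g1 * g2) = 1"
proof -
  have "(a1 * a2 * h + a1 * b2 * g2 + a2 * b1 * g1) * h + (b1 * b2) * (g1 * g2)
      = (a1 * h + b1 * g1) * (a2 * h + b2 * g2)"
    by (simp add: algebra_simps)
  with assms show ?thesis
    by simp
qed

locale q_frobenius =
  fixes field_type :: "'a::field itself" and p m q :: nat
  assumes prime_p: "prime p" and CHAR_eq: "CHAR('a) = p" and m_pos: "m > 0" and q_eq: "q = p ^ m"
begin

lemma q_ge_2: "q \<ge> 2"
proof -
  have "p \<ge> 2"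
    using prime_p prime_ge_2_nat by blast
  moreover have "p ^ 1 \<le> p ^ m"
    using m_pos \<open>p \<ge> 2\<close> by (intro power_increasing) auto
  ultimately show ?thesis
    using q_eq by simp
qed

lemma power_q_power_add: "(x + y :: 'a) ^ q ^ i = x ^ q ^ i + y ^ q ^ i"
  by (rule freshmans_dream'[where n = "m * i"]) (simp_all add: CHAR_eq prime_p q_eq power_mult)

lemma power_q_power_sum: "(\<Sum>j\<in>A. f j :: 'a) ^ q ^ i = (\<Sum>j\<in>A. f j ^ q ^ i)"
  by (rule freshmans_dream_sum'[where n = "m * i"]) (simp_all add: CHAR_eq prime_p q_eq power_mult)

lemma power_q_power_minus: "(- x :: 'a) ^ q ^ i = - (x ^ q ^ i)"
proof -
  have "0 = (x + - x) ^ q ^ i"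
    using q_ge_2 by simp
  also have "\<dots> = x ^ q ^ i + (- x) ^ q ^ i"
    by (rule power_q_power_add)
  finally show ?thesis
    by (simp add: eq_neg_iff_add_eq_0 add.commute)
qed

lemma power_q_power_diff: "(x - y :: 'a) ^ q ^ i = x ^ q ^ i - y ^ q ^ i"
  using power_q_power_add[of x "- y" i] by (simp add: power_q_power_minus)

lemma Fq_0: "(0::'a) \<in> Fq q"
  using q_ge_2 by (simp add: Fq_def)

lemma Fq_add: "a \<in> Fq q \<Longrightarrow> b \<in> Fq q \<Longrightarrow> (a + b :: 'a) \<in> Fq q"
  using power_q_power_add[of a b 1] by (simp add: Fq_def)

lemma Fq_diff: "a \<in> Fq q \<Longrightarrow> b \<in> Fq q \<Longrightarrow> (a - b :: 'a) \<in> Fq q"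
  using power_q_power_diff[of a b 1] by (simp add: Fq_def)

lemma Fq_sum: "(\<And>i. i \<in> A \<Longrightarrow> f i \<in> Fq q) \<Longrightarrow> (\<Sum>i\<in>A. f i :: 'a) \<in> Fq q"
  by (induction A rule: infinite_finite_induct) (simp_all add: Fq_0 Fq_add)

lemma poly_in_Fq: "coeffs_in (Fq q) u \<Longrightarrow> c \<in> Fq q \<Longrightarrow> poly u (c :: 'a) \<in> Fq q"
  by (simp add: poly_altdef coeffs_in_def Fq_sum Fq_mult Fq_power)

lemma coeffs_in_Fq_0: "coeffs_in (Fq q) (0 :: 'a poly)"
  by (simp add: coeffs_in_def Fq_0)

lemma coeffs_in_Fq_const: "c \<in> Fq q \<Longrightarrow> coeffs_in (Fq q) [:c :: 'a:]"
  by (simp add: coeffs_in_def coeff_pCons Fq_0 split: nat.split)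

lemma coeffs_in_Fq_1: "coeffs_in (Fq q) (1 :: 'a poly)"
  by (simp add: coeffs_in_def coeff_1 Fq_0 Fq_1)

lemma coeffs_in_Fq_add:
  "coeffs_in (Fq q) u \<Longrightarrow> coeffs_in (Fq q) v \<Longrightarrow> coeffs_in (Fq q) (u + v :: 'a poly)"
  by (simp add: coeffs_in_def Fq_add)

lemma coeffs_in_Fq_diff:
  "coeffs_in (Fq q) u \<Longrightarrow> coeffs_in (Fq q) v \<Longrightarrow> coeffs_in (Fq q) (u - v :: 'a poly)"
  by (simp add: coeffs_in_def Fq_diff)

lemma coeffs_in_Fq_smult:
  "c \<in> Fq q \<Longrightarrow> coeffs_in (Fq q) u \<Longrightarrow> coeffs_in (Fq q) (smult c u :: 'a poly)"
  by (simp add: coeffs_in_def Fq_mult)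

lemma coeffs_in_Fq_x_minus_1: "coeffs_in (Fq q) [:-1, 1 :: 'a:]"
  using Fq_diff[OF Fq_0 Fq_1] by (simp add: coeffs_in_def coeff_pCons Fq_0 Fq_1 split: nat.split)

lemma coeffs_in_Fq_uminus: "coeffs_in (Fq q) u \<Longrightarrow> coeffs_in (Fq q) (- u :: 'a poly)"
  using coeffs_in_Fq_diff[OF coeffs_in_Fq_0, of u] by simp

lemma coeffs_in_Fq_mult:
  "coeffs_in (Fq q) u \<Longrightarrow> coeffs_in (Fq q) v \<Longrightarrow> coeffs_in (Fq q) (u * v :: 'a poly)"
  unfolding coeffs_in_def coeff_mult by (intro allI Fq_sum Fq_mult) auto

lemma coeffs_in_Fq_monom_minus_one: "coeffs_in (Fq q) (monom 1 n - 1 :: 'a poly)"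
  by (simp add: coeffs_in_def coeff_1 Fq_0 Fq_1 Fq_diff)

lemma coeffs_in_Fq_geom_poly: "coeffs_in (Fq q) (geom_poly n :: 'a poly)"
  by (simp add: coeffs_in_def coeff_geom_poly Fq_0 Fq_1)

definition frobenius_poly :: "'a poly \<Rightarrow> 'a poly" where
  "frobenius_poly u = map_poly (\<lambda>c. c ^ q) u"

lemma coeff_frobenius_poly: "coeff (frobenius_poly u) i = coeff u i ^ q"
  using q_ge_2 by (simp add: frobenius_poly_def coeff_map_poly)

lemma degree_frobenius_poly: "degree (frobenius_poly u) = degree u"
  unfolding frobenius_poly_def using q_ge_2 by (intro degree_map_poly) simp

lemma frobenius_poly_add: "frobenius_poly (u + v) = frobenius_poly u + frobenius_poly v"
  using power_q_power_add[of _ _ 1] by (intro poly_eqI) (simp add: coeff_frobenius_poly)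

lemma frobenius_poly_mult: "frobenius_poly (u * v) = frobenius_poly u * frobenius_poly v"
  by (intro poly_eqI)
    (simp add: coeff_frobenius_poly coeff_mult power_mult_distrib power_q_power_sum[of _ _ 1, simplified])

lemma frobenius_poly_eq_iff: "frobenius_poly u = u \<longleftrightarrow> coeffs_in (Fq q) u"
  by (simp add: poly_eq_iff coeff_frobenius_poly coeffs_in_def Fq_def)

(* Division with remainder commutes with the coefficientwise Frobenius u \<mapsto> u^q,
   whose fixed points are exactly the polynomials over F_q. *)
lemma coeffs_in_Fq_div_mod:
  assumes "coeffs_in (Fq q) x" "coeffs_in (Fq q) (y :: 'a poly)"
  shows "coeffs_in (Fq q) (x div y) \<and> coeffs_in (Fq q) (x mod y)"
proof -
  have fixed: "frobenius_poly x = x" "frobenius_poly y = y"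
    using assms by (simp_all add: frobenius_poly_eq_iff)
  have decomp: "x = frobenius_poly (x div y) * y + frobenius_poly (x mod y)"
    by (metis div_mult_mod_eq fixed frobenius_poly_add frobenius_poly_mult)
  have zero: "frobenius_poly 0 = 0"
    by (simp add: frobenius_poly_def)
  have "(x div y, x mod y) = (frobenius_poly (x div y), frobenius_poly (x mod y))"
  proof (induction rule: euclidean_relation_polyI)
    case by0
    then show ?case
      using fixed zero by simp
  next
    case divides
    then show ?case
      using decomp zero by simp
  next
    case euclidean_relation
    then show ?case
      using decomp by (simp add: degree_frobenius_poly degree_mod_less_degree)
  qed
  then show ?thesis
    by (simp flip: frobenius_poly_eq_iff)
qed

lemma Fq_poly_gcd_combination:
  assumes "coeffs_in (Fq q) h" "coeffs_in (Fq q) (g :: 'a poly)"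
  shows "\<exists>a b. coeffs_in (Fq q) a \<and> coeffs_in (Fq q) b \<and> (a * h + b * g) dvd h \<and> (a * h + b * g) dvd g"
  using assms
proof (induction "euclidean_size g" arbitrary: h g rule: less_induct)
  case less
  show ?case
  proof (cases "g = 0")
    case True
    then show ?thesis
      using coeffs_in_Fq_0 coeffs_in_Fq_1 by (intro exI[of _ 1] exI[of _ 0]) simp
  next
    case False
    have mod_in: "coeffs_in (Fq q) (h mod g)" and div_in: "coeffs_in (Fq q) (h div g)"
      using coeffs_in_Fq_div_mod[OF less.prems] by simp_all
    have "euclidean_size (h mod g) < euclidean_size g"
      using False by (rule mod_size_less)
    from less.hyps[OF this less.prems(2) mod_in] obtain a b where ab: "coeffs_in (Fq q) a"
      "coeffs_in (Fq q) b" "(a * g + b * (h mod g)) dvd g" "(a * g + b * (h mod g)) dvd (h mod g)"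
      by blast
    have "b * ((h div g) * g + h mod g) + (a - b * (h div g)) * g = a * g + b * (h mod g)"
      by algebra
    then have d_eq: "b * h + (a - b * (h div g)) * g = a * g + b * (h mod g)"
      by (simp only: div_mult_mod_eq)
    have "(a * g + b * (h mod g)) dvd (h div g) * g + h mod g"
      using ab(3,4) by (rule dvd_add [OF dvd_mult])
    then have "(b * h + (a - b * (h div g)) * g) dvd h"
      by (simp only: d_eq div_mult_mod_eq)
    moreover have "(b * h + (a - b * (h div g)) * g) dvd g"
      using ab(3) by (simp only: d_eq)
    moreover have "coeffs_in (Fq q) (a - b * (h div g))"
      using ab(1,2) div_in by (intro coeffs_in_Fq_diff coeffs_in_Fq_mult)
    ultimately show ?thesis
      using ab(2) by blast
  qed
qed

lemma Fq_poly_bezout: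
  assumes "coeffs_in (Fq q) h" "coeffs_in (Fq q) (g :: 'a poly)" "coprime h g"
  obtains a b where "coeffs_in (Fq q) a" "coeffs_in (Fq q) b" "a * h + b * g = 1"
proof -
  obtain a b where ab: "coeffs_in (Fq q) a" "coeffs_in (Fq q) b"
    "(a * h + b * g) dvd h" "(a * h + b * g) dvd g"
    using Fq_poly_gcd_combination[OF assms(1,2)] by blast
  then have "is_unit (a * h + b * g)"
    using assms(3) coprime_common_divisor by blast
  then obtain c where c: "a * h + b * g = [:c:]" "c \<noteq> 0"
    unfolding is_unit_poly_iff by fastforce
  have "coeffs_in (Fq q) (a * h + b * g)"
    by (intro coeffs_in_Fq_add coeffs_in_Fq_mult ab(1,2) assms(1,2))
  then have "coeff [:c:] 0 \<in> Fq q"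
    unfolding c(1) coeffs_in_def by blast
  then have "c \<in> Fq q"
    by simp
  then have "coeffs_in (Fq q) (smult (inverse c) a)" "coeffs_in (Fq q) (smult (inverse c) b)"
    using ab(1,2) by (simp_all add: coeffs_in_def Fq_mult Fq_inverse)
  moreover have "smult (inverse c) a * h + smult (inverse c) b * g = 1"
  proof -
    have "smult (inverse c) a * h + smult (inverse c) b * g = smult (inverse c) (a * h + b * g)"
      by (simp add: smult_add_right)
    then show ?thesis
      using c by simp
  qed
  ultimately show ?thesis
    by (rule that)
qed

lemma Fq_poly_common_factor:
  assumes "coeffs_in (Fq q) h" "coeffs_in (Fq q) (g :: 'a poly)" "g \<noteq> 0" "\<not> coprime h g"
  obtains d where "coeffs_in (Fq q) d" "degree d > 0" "d dvd h" "d dvd g"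
proof -
  obtain a b where ab: "coeffs_in (Fq q) a" "coeffs_in (Fq q) b"
    "(a * h + b * g) dvd h" "(a * h + b * g) dvd g"
    using Fq_poly_gcd_combination[OF assms(1,2)] by blast
  have "degree (a * h + b * g) > 0"
  proof (rule ccontr)
    assume "\<not> ?thesis"
    moreover have "a * h + b * g \<noteq> 0"
      using ab(4) assms(3) by auto
    ultimately have "is_unit (a * h + b * g)"
      by (simp add: is_unit_iff_degree)
    have "coprime h g"
    proof (rule coprimeI)
      fix c
      assume "c dvd h" "c dvd g"
      then have "c dvd a * h + b * g"
        by simp
      then show "is_unit c"
        using \<open>is_unit (a * h + b * g)\<close> by (rule dvd_unit_imp_unit)
    qed
    with assms(4) show False
      by contradiction
  qed
  moreover have "coeffs_in (Fq q) (a * h + b * g)"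
    by (intro coeffs_in_Fq_add coeffs_in_Fq_mult ab(1,2) assms(1,2))
  ultimately show ?thesis
    using that ab(3,4) by blast
qed

lemma Fq_poly_bezout_x_minus_1:
  assumes "coeffs_in (Fq q) h" "poly h 1 \<noteq> (0 :: 'a)"
  obtains a b where "coeffs_in (Fq q) a" "coeffs_in (Fq q) b" "a * h + b * [:-1, 1:] = 1"
proof -
  define c where "c = poly h 1"
  have c: "c \<in> Fq q" "c \<noteq> 0"
    using poly_in_Fq[OF assms(1) Fq_1] assms(2) by (simp_all add: c_def)
  define s where "s = (h - [:c:]) div [:-1, 1:]"
  have "[:-1, 1:] dvd h - [:c:]"
    by (simp add: c_def flip: poly_eq_0_iff_dvd)
  then have "[:-1, 1:] * s = h - [:c:]"
    unfolding s_def by (rule dvd_mult_div_cancel)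
  then have s_eq: "h - [:-1, 1:] * s = [:c:]"
    by (simp only:) simp
  have "coeffs_in (Fq q) s"
    unfolding s_def using assms(1) c(1)
    by (simp add: coeffs_in_Fq_div_mod coeffs_in_Fq_diff coeffs_in_Fq_const coeffs_in_Fq_x_minus_1)
  then have "coeffs_in (Fq q) [:inverse c:]" "coeffs_in (Fq q) (- smult (inverse c) s)"
    using c(1) by (simp_all add: Fq_inverse coeffs_in_Fq_const coeffs_in_Fq_smult coeffs_in_Fq_uminus)
  moreover have "[:inverse c:] * h + (- smult (inverse c) s) * [:-1, 1:] = 1"
  proof -
    have "[:inverse c:] * h + (- smult (inverse c) s) * [:-1, 1:] = smult (inverse c) (h - [:-1, 1:] * s)"
      by (simp add: smult_diff_right mult.commute)
    then show ?thesis
      using c(2) by (simp only: s_eq) simp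
  qed
  ultimately show ?thesis
    by (rule that)
qed

(* As p divides n, x - 1 divides (x^n - 1)/(x - 1); hence h(1) \<noteq> 0 and h is also
   invertible modulo x - 1. *)
lemma Fq_poly_bezout_monom_minus_one:
  assumes "coeffs_in (Fq q) h" "coprime h (geom_poly n)" "p dvd n"
  obtains a b :: "'a poly"
    where "coeffs_in (Fq q) a" "coeffs_in (Fq q) b" "a * h + b * (monom 1 n - 1) = 1"
proof -
  obtain a1 b1 where 1: "coeffs_in (Fq q) a1" "coeffs_in (Fq q) b1" "a1 * h + b1 * geom_poly n = 1"
    using Fq_poly_bezout[OF assms(1) coeffs_in_Fq_geom_poly assms(2)] .
  have "poly h 1 \<noteq> (0 :: 'a)"
  proof
    assume "poly h 1 = 0"
    then have "[:-1, 1:] dvd h"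
      by (simp add: poly_eq_0_iff_dvd)
    moreover have "[:-1, 1:] dvd (geom_poly n :: 'a poly)"
      using assms(3) by (simp flip: poly_eq_0_iff_dvd add: poly_geom_poly_1 of_nat_eq_0_iff_char_dvd CHAR_eq)
    ultimately have "is_unit [:-1, 1 :: 'a:]"
      using assms(2) coprime_common_divisor by blast
    then show False
      by (simp add: is_unit_poly_iff)
  qed
  then obtain a2 b2 where 2: "coeffs_in (Fq q) a2" "coeffs_in (Fq q) b2" "a2 * h + b2 * [:-1, 1:] = 1"
    using Fq_poly_bezout_x_minus_1[OF assms(1)] by blast
  have "(a1 * a2 * h + a1 * b2 * [:-1, 1:] + a2 * b1 * geom_poly n) * h
      + (b1 * b2) * (geom_poly n * [:-1, 1:]) = 1"
    by (rule bezout_mult_right[OF 1(3) 2(3)])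
  moreover have "coeffs_in (Fq q) (a1 * a2 * h + a1 * b2 * [:-1, 1:] + a2 * b1 * geom_poly n)"
    using 1 2 assms(1)
    by (intro coeffs_in_Fq_add coeffs_in_Fq_mult coeffs_in_Fq_x_minus_1 coeffs_in_Fq_geom_poly; simp)
  moreover have "coeffs_in (Fq q) (b1 * b2)"
    using 1 2 by (intro coeffs_in_Fq_mult)
  ultimately show ?thesis
    using that by (simp add: monom_minus_one_eq mult.commute)
qed

lemma Fq_poly_mod_inverse:
  assumes "coeffs_in (Fq q) a" "coeffs_in (Fq q) (g :: 'a poly)" "g \<noteq> 0" "a * h + b * g = 1"
  shows "\<exists>!H. coeffs_in (Fq q) H \<and> (\<forall>i\<ge>degree g. coeff H i = 0) \<and> g dvd h * H - 1"
proof (rule ex_ex1I)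
  have "h * (a - a div g * g) - (a * h + b * g) = g * (- (h * (a div g)) - b)"
    by algebra
  then have "h * (a mod g) - 1 = g * (- (h * (a div g)) - b)"
    by (simp only: minus_div_mult_eq_mod assms(4))
  then have "g dvd h * (a mod g) - 1"
    by simp
  moreover have "coeff (a mod g) i = 0" if "i \<ge> degree g" for i
    using that degree_mod_less_degree[of g a] assms(3) by (cases "g dvd a") (auto intro: coeff_eq_0)
  ultimately show "\<exists>H. coeffs_in (Fq q) H \<and> (\<forall>i\<ge>degree g. coeff H i = 0) \<and> g dvd h * H - 1"
    using coeffs_in_Fq_div_mod[OF assms(1,2)] by blast
next
  fix H1 H2
  assume H1: "coeffs_in (Fq q) H1 \<and> (\<forall>i\<ge>degree g. coeff H1 i = 0) \<and> g dvd h * H1 - 1"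
    and H2: "coeffs_in (Fq q) H2 \<and> (\<forall>i\<ge>degree g. coeff H2 i = 0) \<and> g dvd h * H2 - 1"
  have "g dvd h * (H1 - H2)"
    using dvd_diff[of g "h * H1 - 1" "h * H2 - 1"] H1 H2 by (simp add: algebra_simps)
  then have "g dvd a * (h * (H1 - H2)) + g * (b * (H1 - H2))"
    by (rule dvd_add[OF dvd_mult dvd_triv_left])
  moreover have "a * (h * (H1 - H2)) + g * (b * (H1 - H2)) = (a * h + b * g) * (H1 - H2)"
    by algebra
  ultimately have "g dvd H1 - H2"
    by (simp add: assms(4))
  show "H1 = H2"
  proof (rule ccontr)
    assume "H1 \<noteq> H2"
    then have "degree g \<le> degree (H1 - H2)"
      using \<open>g dvd H1 - H2\<close> by (intro dvd_imp_degree_le) auto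
    then have "coeff H1 (degree (H1 - H2)) = 0" "coeff H2 (degree (H1 - H2)) = 0"
      using H1 H2 by simp_all
    then have "lead_coeff (H1 - H2) = 0"
      by simp
    with \<open>H1 \<noteq> H2\<close> show False
      by (metis leading_coeff_0_iff right_minus_eq)
  qed
qed

lemma unique_mod_inverse_monom_minus_one:
  assumes "coeffs_in (Fq q) (h :: 'a poly)" "coprime h (geom_poly n)" "p dvd n" "n > 0"
  shows "\<exists>!H. coeffs_in (Fq q) H \<and> (\<forall>i\<ge>n. coeff H i = 0) \<and> (monom 1 n - 1) dvd (h * H - 1)"
proof -
  obtain a b where ab: "coeffs_in (Fq q) a" "a * h + b * (monom 1 n - 1) = 1"
    using Fq_poly_bezout_monom_minus_one[OF assms(1-3)] by blast
  have "monom 1 n - 1 \<noteq> (0 :: 'a poly)"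
    using degree_monom_minus_one[OF assms(4), where 'a = 'a] assms(4) by auto
  from Fq_poly_mod_inverse[OF ab(1) coeffs_in_Fq_monom_minus_one this ab(2)] show ?thesis
    by (simp only: degree_monom_minus_one[OF assms(4), where 'a = 'a])
qed

lemma unique_mod_inverse_geom_poly:
  assumes "coeffs_in (Fq q) (h :: 'a poly)" "coprime h (geom_poly n)" "n > 0"
  shows "\<exists>!H. coeffs_in (Fq q) H \<and> (\<forall>i\<ge>n - 1. coeff H i = 0) \<and> geom_poly n dvd (h * H - 1)"
proof -
  obtain a b where ab: "coeffs_in (Fq q) a" "a * h + b * geom_poly n = 1"
    using Fq_poly_bezout[OF assms(1) coeffs_in_Fq_geom_poly assms(2)] by blast
  from Fq_poly_mod_inverse[OF ab(1) coeffs_in_Fq_geom_poly geom_poly_nonzero[OF assms(3)] ab(2)]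
  show ?thesis
    by (simp only: degree_geom_poly[OF assms(3)])
qed

lemma lin_map_power_q:
  assumes "coeffs_in (Fq q) v"
  shows "lin_map q v (x ^ q) = lin_map q v (x :: 'a) ^ q"
proof -
  have "lin_map q v x ^ q = (\<Sum>i\<le>degree v. (coeff v i * x ^ q ^ i) ^ q ^ 1)"
    by (simp add: lin_map_eq_sum[OF order.refl] power_q_power_sum[of _ _ 1, simplified])
  also have "\<dots> = (\<Sum>i\<le>degree v. coeff v i * (x ^ q) ^ q ^ i)"
    using assms by (simp add: coeffs_in_def Fq_def power_mult_distrib mult.commute flip: power_mult)
  finally show ?thesis
    by (simp add: lin_map_eq_sum[OF order.refl])
qed

lemma lin_map_mult:
  assumes "coeffs_in (Fq q) v"
  shows "lin_map q (u * v) x = lin_map q u (lin_map q v (x :: 'a))"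
proof (induction u arbitrary: x rule: pCons_induct)
  case (pCons a u)
  have "pCons a u * v = smult a v + pCons 0 (u * v)"
    by simp
  then have "lin_map q (pCons a u * v) x = a * lin_map q v x + lin_map q u (lin_map q v (x ^ q))"
    by (simp only: lin_map_add lin_map_smult lin_map_pCons pCons.IH) simp
  also have "\<dots> = lin_map q (pCons a u) (lin_map q v x)"
    by (simp add: lin_map_pCons lin_map_power_q assms)
  finally show ?case .
qed (simp add: lin_map_0)

lemma lin_map_add_right: "lin_map q u (x + y :: 'a) = lin_map q u x + lin_map q u y"
  by (simp add: lin_map_eq_sum[OF order.refl] power_q_power_add sum.distrib distrib_left)

lemma lin_map_diff_right: "lin_map q u (x - y :: 'a) = lin_map q u x - lin_map q u y"
  by (simp add: lin_map_eq_sum[OF order.refl] power_q_power_diff sum_subtractf right_diff_distrib)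

lemma lin_map_0_right: "lin_map q u (0 :: 'a) = 0"
  using lin_map_diff_right[of u 0 0] by simp

lemma lin_map_sum_right: "lin_map q u (\<Sum>i\<in>A. f i :: 'a) = (\<Sum>i\<in>A. lin_map q u (f i))"
  by (induction A rule: infinite_finite_induct) (simp_all add: lin_map_0_right lin_map_add_right)

lemma lin_map_scale_right: "c \<in> Fq q \<Longrightarrow> lin_map q u (c * x :: 'a) = c * lin_map q u x"
  by (simp add: lin_map_eq_sum[OF order.refl] power_mult_distrib Fq_power_q_power sum_distrib_left mult_ac)

end

section \<open>The trace of \<open>F\<^sub>q\<^sup>n / F\<^sub>q\<close>\<close>

locale finite_extension = q_frobenius field_type p m q
  for field_type :: "'a::{field,finite} itself" and p m q :: nat +
  fixes n :: nat
  assumes n_pos: "n > 0" and card_UNIV: "card (UNIV :: 'a set) = q ^ n"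
begin

lemma power_q_power_n: "(x :: 'a) ^ q ^ n = x"
proof (cases "x = 0")
  case False
  have "(\<Prod>y\<in>UNIV - {0}. x * y) = (\<Prod>y\<in>UNIV - {0}. y)"
    by (rule prod.reindex_bij_witness[of _ "\<lambda>y. y / x" "\<lambda>y. x * y"]) (use False in auto)
  moreover have "(\<Prod>y\<in>UNIV - {0}. x * y) = x ^ (card (UNIV :: 'a set) - 1) * (\<Prod>y\<in>UNIV - {0}. y)"
    by (simp add: prod.distrib card_Diff_singleton)
  moreover have "(\<Prod>y\<in>UNIV - {0::'a}. y) \<noteq> 0"
    by simp
  ultimately have "x ^ (card (UNIV :: 'a set) - 1) = 1"
    by simp
  moreover have "card (UNIV :: 'a set) = Suc (card (UNIV :: 'a set) - 1)"
    using finite_UNIV_card_ge_0[where ?'a = 'a] by simp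
  ultimately have "x ^ card (UNIV :: 'a set) = x"
    by (metis power_Suc2 mult_1)
  then show ?thesis
    by (simp add: card_UNIV)
qed (use q_ge_2 in simp)

lemma lin_map_monom_minus_one: "lin_map q (monom 1 n - 1) (x :: 'a) = 0"
  by (simp add: lin_map_diff lin_map_monom lin_map_1 power_q_power_n)

lemma trace_in_Fq: "trace q n (x :: 'a) \<in> Fq q"
proof -
  have "trace q n x ^ q = lin_map q (geom_poly n) (x ^ q)"
    using lin_map_power_q[OF coeffs_in_Fq_geom_poly, where x = x] by (simp add: lin_map_geom_poly)
  also have "\<dots> = lin_map q (pCons 0 (geom_poly n)) x"
    by (simp add: lin_map_pCons)
  also have "pCons 0 (geom_poly n) = (monom 1 n - 1) + geom_poly n"
    by (simp add: monom_minus_one_eq)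
  also have "lin_map q \<dots> x = trace q n x"
    by (simp add: lin_map_add lin_map_monom_minus_one lin_map_geom_poly)
  finally show ?thesis
    by (simp add: Fq_def)
qed

lemma trace_0: "trace q n (0 :: 'a) = 0"
  using lin_map_0_right[of "geom_poly n"] by (simp add: lin_map_geom_poly)

lemma trace_add: "trace q n (x + y) = trace q n x + trace q n (y :: 'a)"
  using lin_map_add_right[of "geom_poly n" x y] by (simp add: lin_map_geom_poly)

lemma trace_diff: "trace q n (x - y) = trace q n x - trace q n (y :: 'a)"
  using lin_map_diff_right[of "geom_poly n" x y] by (simp add: lin_map_geom_poly)

lemma trace_sum: "trace q n (\<Sum>i\<in>A. f i) = (\<Sum>i\<in>A. trace q n (f i :: 'a))"
  using lin_map_sum_right[of "geom_poly n" f A] by (simp add: lin_map_geom_poly)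

lemma trace_scale: "c \<in> Fq q \<Longrightarrow> trace q n (c * x) = c * trace q n (x :: 'a)"
  using lin_map_scale_right[of c "geom_poly n" x] by (simp add: lin_map_geom_poly)

lemma trace_lin_map:
  assumes "coeffs_in (Fq q) h"
  shows "trace q n (lin_map q h x) = poly h 1 * trace q n (x :: 'a)"
proof -
  have "trace q n (lin_map q h x) = lin_map q (geom_poly n * h) x"
    by (simp add: lin_map_mult assms lin_map_geom_poly)
  also have "\<dots> = lin_map q h (trace q n x)"
    by (simp only: mult.commute[of "geom_poly n"] lin_map_mult coeffs_in_Fq_geom_poly lin_map_geom_poly)
  also have "\<dots> = poly h 1 * trace q n x"
    by (rule lin_map_Fq[OF trace_in_Fq])
  finally show ?thesis .
qed

lemma poly_Tn_Fq:
  assumes "c \<in> Fq q"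
  shows "poly (Tn q n f) c = trace q n (poly f (c :: 'a))"
proof -
  have "poly (Tn q n f) c = (\<Sum>i\<le>degree f. c ^ i * trace q n (coeff f i))"
    by (simp add: Tn_def poly_sum poly_monom mult.commute)
  also have "\<dots> = (\<Sum>i\<le>degree f. trace q n (c ^ i * coeff f i))"
    using assms by (simp add: trace_scale Fq_power)
  also have "\<dots> = trace q n (poly f c)"
    by (simp add: poly_altdef trace_sum mult.commute)
  finally show ?thesis .
qed

lemma lin_map_nonzero:
  assumes "u \<noteq> 0" "degree u < n"
  obtains z :: 'a where "lin_map q u z \<noteq> 0"
proof -
  have "coeff (lin_assoc q u) (q ^ degree u) \<noteq> 0"
    using assms(1) q_ge_2 by (simp add: coeff_lin_assoc_power)
  then have nonzero: "lin_assoc q u \<noteq> 0"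
    by auto
  have "degree (lin_assoc q u) \<le> q ^ degree u"
    using q_ge_2 by (intro degree_lin_assoc_le) simp
  also have "\<dots> < q ^ n"
    using q_ge_2 assms(2) by (intro power_strict_increasing) auto
  finally have "card {z :: 'a. lin_map q u z = 0} < card (UNIV :: 'a set)"
    using card_poly_roots_bound[OF nonzero] card_UNIV by linarith
  then show ?thesis
    using that by force
qed

lemma trace_surj:
  assumes "c \<in> Fq q"
  obtains x :: 'a where "trace q n x = c"
proof -
  obtain z :: 'a where z: "trace q n z \<noteq> 0"
    using lin_map_nonzero[OF geom_poly_nonzero[OF n_pos]] n_pos
    by (auto simp: degree_geom_poly lin_map_geom_poly)
  have "trace q n (c / trace q n z * z) = c / trace q n z * trace q n z"
    using assms trace_in_Fq by (intro trace_scale Fq_divide)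
  also have "\<dots> = c"
    using z by simp
  finally show ?thesis
    by (rule that)
qed

lemma common_kernel_trivial:
  assumes "coeffs_in (Fq q) h" "coprime h (geom_poly n)"
    and "trace q n z = 0" "lin_map q h (z :: 'a) = 0"
  shows "z = 0"
proof -
  obtain a b where ab: "coeffs_in (Fq q) a" "coeffs_in (Fq q) b" "a * h + b * geom_poly n = 1"
    using Fq_poly_bezout[OF assms(1) coeffs_in_Fq_geom_poly assms(2)] .
  have "z = lin_map q (a * h + b * geom_poly n) z"
    by (simp add: ab(3) lin_map_1)
  also have "\<dots> = lin_map q a (lin_map q h z) + lin_map q b (trace q n z)"
    by (simp add: lin_map_add lin_map_mult assms(1) coeffs_in_Fq_geom_poly lin_map_geom_poly)
  also have "\<dots> = 0"
    using assms(3,4) by (simp add: lin_map_0_right)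
  finally show ?thesis .
qed

(* A common factor d divides x^n - 1 = d w; then L_d kills the image of L_w, which is
   nonzero because deg w < n. *)
lemma common_kernel_nontrivial:
  assumes "coeffs_in (Fq q) h" "\<not> coprime h (geom_poly n)"
  obtains z :: 'a where "z \<noteq> 0" "trace q n z = 0" "lin_map q h z = 0"
proof -
  obtain d where d: "coeffs_in (Fq q) d" "degree d > 0" "d dvd h" "d dvd geom_poly n"
    using Fq_poly_common_factor[OF assms(1) coeffs_in_Fq_geom_poly geom_poly_nonzero[OF n_pos] assms(2)] .
  define w where "w = (monom 1 n - 1) div d"
  have "d dvd monom 1 n - 1"
    unfolding monom_minus_one_eq using d(4) by (rule dvd_mult)
  then have dw: "monom 1 n - 1 = d * w"
    by (simp add: w_def)
  have w: "coeffs_in (Fq q) w"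
    unfolding w_def using coeffs_in_Fq_div_mod[OF coeffs_in_Fq_monom_minus_one d(1)] by simp
  have "w \<noteq> 0"
    using dw degree_monom_minus_one[OF n_pos, where 'a = 'a] n_pos by auto
  moreover have "d \<noteq> 0"
    using d(2) by auto
  ultimately have "degree d + degree w = n"
    using dw degree_monom_minus_one[OF n_pos, where 'a = 'a] by (metis degree_mult_eq)
  then have "degree w < n"
    using d(2) by linarith
  then obtain y where y: "lin_map q w y \<noteq> 0"
    using lin_map_nonzero[OF \<open>w \<noteq> 0\<close>] by blast
  define z where "z = lin_map q w y"
  have dz: "lin_map q d z = 0"
    using lin_map_monom_minus_one[of y] by (simp add: z_def dw lin_map_mult w)
  have "lin_map q h z = lin_map q (h div d) (lin_map q d z)"
    using d(3) by (simp flip: lin_map_mult[OF d(1)])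
  moreover have "trace q n z = lin_map q (geom_poly n div d) (lin_map q d z)"
    using d(4) by (simp flip: lin_map_mult[OF d(1)] add: lin_map_geom_poly)
  ultimately show ?thesis
    using that y dz by (simp add: z_def lin_map_0_right)
qed

end

lemma finite_extensionI:
  assumes "prime p" "m > 0" "q = p ^ m" "n > 0" "card (UNIV :: 'a::{field,finite} set) = q ^ n"
  shows "finite_extension TYPE('a) p m q n"
proof -
  have "CHAR('a) = p"
    using CHAR_finite_field[OF assms(1), of "m * n"] assms(3,5) by (simp add: power_mult)
  then show ?thesis
    by unfold_locales (use assms in simp_all)
qed

section \<open>Polynomials of trace form\<close>

(* trace_form q n f k h is the polynomial P of the theorem and trace_reduction q n f k h is Q.
   The inverse P0 is again of trace form: trace_form q n F ((k \<circ>\<^sub>p R)^(q-2)) H. *)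
definition trace_form :: "nat \<Rightarrow> nat \<Rightarrow> 'a::field poly \<Rightarrow> 'a poly \<Rightarrow> 'a poly \<Rightarrow> 'a poly" where
  "trace_form q n f k h = pcompose f (trace_poly q n) + pcompose k (trace_poly q n) * lin_assoc q h"

definition trace_reduction :: "nat \<Rightarrow> nat \<Rightarrow> 'a::field poly \<Rightarrow> 'a poly \<Rightarrow> 'a poly \<Rightarrow> 'a poly" where
  "trace_reduction q n f k h = Tn q n f + k * smult (poly h 1) [:0, 1:]"

lemma poly_trace_form:
  "poly (trace_form q n f k h) x = poly f (trace q n x) + poly k (trace q n x) * lin_map q h x"
  by (simp add: trace_form_def poly_pcompose poly_trace_poly)

lemma pcompose_power_left: "pcompose (p ^ i) r = pcompose p r ^ i"
  by (induction i) (simp_all add: pcompose_1 pcompose_mult)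

lemma bij_left_inverse_imp_inverse:
  assumes "bij f" "\<And>x. g (f x) = x"
  shows "\<forall>x. g (f x) = x \<and> f (g x) = x"
proof (intro allI conjI)
  fix x
  show "g (f x) = x"
    by (rule assms(2))
  obtain z where "x = f z"
    using bij_is_surj[OF assms(1)] by (rule surjE)
  then show "f (g x) = x"
    by (simp add: assms(2))
qed

context finite_extension
begin

lemma trace_trace_form:
  assumes "coeffs_in (Fq q) h" "\<forall>c\<in>Fq q. poly k c \<in> Fq q"
  shows "trace q n (poly (trace_form q n f k h) x) = poly (trace_reduction q n f k h) (trace q n (x :: 'a))"
proof -
  have "trace q n x \<in> Fq q" "poly k (trace q n x) \<in> Fq q"
    using assms(2) trace_in_Fq by blast+
  then show ?thesis
    by (simp add: poly_trace_form trace_reduction_def trace_add trace_scale poly_Tn_Fq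
        trace_lin_map[OF assms(1)])
qed

lemma trace_reduction_in_Fq:
  assumes "coeffs_in (Fq q) h" "\<forall>c\<in>Fq q. poly k c \<in> Fq q" "c \<in> Fq q"
  shows "poly (trace_reduction q n f k h) (c :: 'a) \<in> Fq q"
  using assms poly_in_Fq[OF assms(1) Fq_1]
  by (simp add: trace_reduction_def poly_Tn_Fq trace_in_Fq Fq_add Fq_mult)

lemma coprime_if_inj_trace_form:
  fixes f k h :: "'a poly"
  assumes h: "coeffs_in (Fq q) h" and inj: "inj (poly (trace_form q n f k h))"
  shows "coprime h (geom_poly n)"
proof (rule ccontr)
  assume "\<not> coprime h (geom_poly n)"
  then obtain z :: 'a where "z \<noteq> 0" "trace q n z = 0" "lin_map q h z = 0"
    using common_kernel_nontrivial[OF h] by blast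
  then have "poly (trace_form q n f k h) z = poly (trace_form q n f k h) 0"
    by (simp add: poly_trace_form trace_0 lin_map_0_right)
  with inj have "z = 0"
    by (rule injD)
  with \<open>z \<noteq> 0\<close> show False
    by contradiction
qed

lemma trace_reduction_image:
  fixes f k h :: "'a poly"
  assumes h: "coeffs_in (Fq q) h" and k: "\<forall>c\<in>Fq q. poly k c \<in> Fq q"
    and surj: "surj (poly (trace_form q n f k h))"
  shows "poly (trace_reduction q n f k h) ` Fq q = Fq q"
proof
  show "poly (trace_reduction q n f k h) ` Fq q \<subseteq> Fq q"
    using trace_reduction_in_Fq[OF h k] by blast
  show "Fq q \<subseteq> poly (trace_reduction q n f k h) ` Fq q"
  proof
    fix c :: 'a
    assume "c \<in> Fq q"
    then obtain y where y: "trace q n y = c"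
      by (rule trace_surj)
    obtain x where "y = poly (trace_form q n f k h) x"
      using surj by (rule surjE)
    then have "c = poly (trace_reduction q n f k h) (trace q n x)"
      using y trace_trace_form[OF h k] by simp
    then show "c \<in> poly (trace_reduction q n f k h) ` Fq q"
      using trace_in_Fq by blast
  qed
qed

lemma inj_trace_form:
  fixes f k h :: "'a poly"
  assumes h: "coeffs_in (Fq q) h" and k: "\<forall>c\<in>Fq q. poly k c \<in> Fq q \<and> poly k c \<noteq> 0"
    and coprime: "coprime h (geom_poly n)" and inj: "inj_on (poly (trace_reduction q n f k h)) (Fq q)"
  shows "inj (poly (trace_form q n f k h))"
proof (rule injI)
  fix x y
  assume eq: "poly (trace_form q n f k h) x = poly (trace_form q n f k h) y"
  have k_Fq: "\<forall>c\<in>Fq q. poly k c \<in> Fq q"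
    using k by blast
  have "poly (trace_reduction q n f k h) (trace q n x) = poly (trace_reduction q n f k h) (trace q n y)"
    using eq by (simp only: trace_trace_form[OF h k_Fq, symmetric])
  then have trace_eq: "trace q n x = trace q n y"
    by (rule inj_onD[OF inj _ trace_in_Fq trace_in_Fq])
  moreover have "poly k (trace q n x) \<noteq> 0"
    using k trace_in_Fq by blast
  ultimately have "lin_map q h x = lin_map q h y"
    using eq by (simp add: poly_trace_form)
  then have "trace q n (x - y) = 0" "lin_map q h (x - y) = 0"
    using trace_eq by (simp_all add: trace_diff lin_map_diff_right)
  then have "x - y = 0"
    by (rule common_kernel_trivial[OF h coprime])
  then show "x = y"
    by simp
qed

lemma bij_trace_form_iff:
  fixes f k h :: "'a poly"
  assumes h: "coeffs_in (Fq q) h" and k: "\<forall>c\<in>Fq q. poly k c \<in> Fq q \<and> poly k c \<noteq> 0"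
  shows "bij (poly (trace_form q n f k h)) \<longleftrightarrow>
    coprime h (geom_poly n) \<and> bij_betw (poly (trace_reduction q n f k h)) (Fq q) (Fq q)"
proof
  assume bij: "bij (poly (trace_form q n f k h))"
  have "poly (trace_reduction q n f k h) ` Fq q = Fq q"
    using k by (intro trace_reduction_image[OF h] bij_is_surj[OF bij]) blast
  moreover from this have "inj_on (poly (trace_reduction q n f k h)) (Fq q)"
    by (intro eq_card_imp_inj_on) simp_all
  ultimately show "coprime h (geom_poly n) \<and> bij_betw (poly (trace_reduction q n f k h)) (Fq q) (Fq q)"
    using coprime_if_inj_trace_form[OF h bij_is_inj[OF bij]] by (simp add: bij_betw_def)
next
  assume "coprime h (geom_poly n) \<and> bij_betw (poly (trace_reduction q n f k h)) (Fq q) (Fq q)"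
  then have "inj (poly (trace_form q n f k h))"
    by (intro inj_trace_form[OF h k]) (simp_all add: bij_betw_def)
  then show "bij (poly (trace_form q n f k h))"
    by (simp add: bij_def finite_UNIV_inj_surj)
qed

lemma lin_map_mod_inverse:
  assumes "coeffs_in (Fq q) h" "coeffs_in (Fq q) H" "coeffs_in (Fq q) G" "h * H - 1 = geom_poly n * G"
  shows "lin_map q H (lin_map q h x) = x + poly G 1 * trace q n (x :: 'a)"
proof -
  have "H * h = 1 + G * geom_poly n"
    using assms(4) by (simp add: algebra_simps)
  then have "lin_map q H (lin_map q h x) = lin_map q (1 + G * geom_poly n) x"
    by (simp flip: lin_map_mult[OF assms(1)])
  also have "\<dots> = x + lin_map q G (trace q n x)"
    by (simp add: lin_map_add lin_map_1 lin_map_mult coeffs_in_Fq_geom_poly lin_map_geom_poly)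
  also have "\<dots> = x + poly G 1 * trace q n x"
    by (simp add: lin_map_Fq trace_in_Fq)
  finally show ?thesis .
qed

lemma trace_form_left_inverse:
  fixes f k h R H F G :: "'a poly"
  assumes h: "coeffs_in (Fq q) h" and k: "\<forall>c\<in>Fq q. poly k c \<in> Fq q \<and> poly k c \<noteq> 0"
    and H: "coeffs_in (Fq q) H" "coeffs_in (Fq q) G" "h * H - 1 = geom_poly n * G"
    and R: "\<forall>c\<in>Fq q. poly R (poly (trace_reduction q n f k h) c) = c"
    and F: "\<forall>s\<in>Fq q. poly F s =
      - (poly k (poly R s) ^ (q - 2) * lin_map q H (poly f (poly R s))) - poly G 1 * poly R s"
  shows "poly (trace_form q n F (pcompose k R ^ (q - 2)) H) (poly (trace_form q n f k h) x) = x"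
proof -
  define t where "t = trace q n x"
  define y where "y = poly (trace_form q n f k h) x"
  have t: "t \<in> Fq q" "poly k t \<in> Fq q" "poly k t \<noteq> 0"
    using k trace_in_Fq unfolding t_def by blast+
  have Rt: "poly R (trace q n y) = t"
    using R trace_trace_form[OF h] k t(1) unfolding y_def t_def by auto
  have inv: "poly k t ^ (q - 2) * poly k t = 1"
    using Fq_power_q_minus_2 t q_ge_2 by blast
  have "lin_map q H y = lin_map q H (poly f t) + poly k t * (x + poly G 1 * t)"
    using t(2) by (simp add: y_def t_def poly_trace_form lin_map_add_right lin_map_scale_right
        lin_map_mod_inverse[OF h H])
  then have "poly (trace_form q n F (pcompose k R ^ (q - 2)) H) y
      = - (poly k t ^ (q - 2) * lin_map q H (poly f t)) - poly G 1 * t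
        + poly k t ^ (q - 2) * (lin_map q H (poly f t) + poly k t * (x + poly G 1 * t))"
    using F trace_in_Fq by (simp add: poly_trace_form poly_pcompose Rt)
  also have "\<dots> = (poly k t ^ (q - 2) * poly k t) * (x + poly G 1 * t) - poly G 1 * t"
    by (simp add: algebra_simps)
  also have "\<dots> = x"
    using inv by simp
  finally show ?thesis
    by (simp add: y_def)
qed

lemma trace_form_inverse_mod_monom_minus_one:
  fixes f k h R H F :: "'a poly"
  assumes h: "coeffs_in (Fq q) h" and k: "\<forall>c\<in>Fq q. poly k c \<in> Fq q \<and> poly k c \<noteq> 0"
    and bij: "bij (poly (trace_form q n f k h))"
    and R: "\<forall>c\<in>Fq q. poly R (poly (trace_reduction q n f k h) c) = c"
    and H: "coeffs_in (Fq q) H" "(monom 1 n - 1) dvd (h * H - 1)"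
    and F: "(monom 1 q - [:0, 1:]) dvd
      (F - - (pcompose k R ^ (q - 2) * pcompose (lin_assoc q H) (pcompose f R)))"
  shows "\<forall>x. poly (trace_form q n F (pcompose k R ^ (q - 2)) H) (poly (trace_form q n f k h) x) = x \<and>
    poly (trace_form q n f k h) (poly (trace_form q n F (pcompose k R ^ (q - 2)) H) x) = x"
proof (rule bij_left_inverse_imp_inverse[OF bij])
  define D where "D = (h * H - 1) div (monom 1 n - 1)"
  define G where "G = [:-1, 1:] * D"
  have "coeffs_in (Fq q) G"
    unfolding G_def D_def using h H(1)
    by (intro coeffs_in_Fq_mult coeffs_in_Fq_x_minus_1)
      (simp add: coeffs_in_Fq_div_mod coeffs_in_Fq_diff coeffs_in_Fq_mult coeffs_in_Fq_1
        coeffs_in_Fq_monom_minus_one)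
  moreover have "h * H - 1 = geom_poly n * G"
  proof -
    have "h * H - 1 = (monom 1 n - 1) * D"
      using H(2) by (simp add: D_def)
    then show ?thesis
      unfolding G_def by (simp only: monom_minus_one_eq mult.assoc mult.left_commute[of "[:-1, 1:]"])
  qed
  moreover have "\<forall>s\<in>Fq q. poly F s =
      - (poly k (poly R s) ^ (q - 2) * lin_map q H (poly f (poly R s))) - poly G 1 * poly R s"
    using poly_eq_on_Fq_if_dvd[OF F] by (simp add: G_def poly_pcompose)
  ultimately show "poly (trace_form q n F (pcompose k R ^ (q - 2)) H) (poly (trace_form q n f k h) x) = x"
    for x by (intro trace_form_left_inverse[OF h k H(1)] R)
qed

lemma trace_form_inverse_mod_geom_poly:
  fixes f k h R H F :: "'a poly"
  assumes h: "coeffs_in (Fq q) h" and k: "\<forall>c\<in>Fq q. poly k c \<in> Fq q \<and> poly k c \<noteq> 0"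
    and bij: "bij (poly (trace_form q n f k h))"
    and R: "\<forall>c\<in>Fq q. poly R (poly (trace_reduction q n f k h) c) = c"
    and H: "coeffs_in (Fq q) H" "geom_poly n dvd (h * H - 1)" and "\<not> p dvd n"
    and F: "(monom 1 q - [:0, 1:]) dvd (F - pcompose (- (k ^ (q - 2) * pcompose (lin_assoc q H) f) +
      smult ((1 - poly h 1 * poly H 1) / of_nat n) [:0, 1:]) R)"
  shows "\<forall>x. poly (trace_form q n F (pcompose k R ^ (q - 2)) H) (poly (trace_form q n f k h) x) = x \<and>
    poly (trace_form q n f k h) (poly (trace_form q n F (pcompose k R ^ (q - 2)) H) x) = x"
proof (rule bij_left_inverse_imp_inverse[OF bij])
  define G where "G = (h * H - 1) div geom_poly n"
  have "coeffs_in (Fq q) G"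
    unfolding G_def using h H(1)
    by (simp add: coeffs_in_Fq_div_mod coeffs_in_Fq_diff coeffs_in_Fq_mult coeffs_in_Fq_1
        coeffs_in_Fq_geom_poly)
  moreover have G: "h * H - 1 = geom_poly n * G"
    using H(2) by (simp add: G_def)
  moreover have "poly G 1 = - ((1 - poly h 1 * poly H 1) / of_nat n)"
  proof -
    have "poly h 1 * poly H 1 - 1 = of_nat n * poly G 1"
      using arg_cong[OF G, of "\<lambda>u. poly u 1"] by (simp add: poly_geom_poly_1)
    moreover have "(of_nat n :: 'a) \<noteq> 0"
      using \<open>\<not> p dvd n\<close> by (simp add: of_nat_eq_0_iff_char_dvd CHAR_eq)
    ultimately show ?thesis
      by (simp add: field_simps)
  qed
  then have "\<forall>s\<in>Fq q. poly F s =
      - (poly k (poly R s) ^ (q - 2) * lin_map q H (poly f (poly R s))) - poly G 1 * poly R s"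
    using poly_eq_on_Fq_if_dvd[OF F] by (simp add: poly_pcompose)
  ultimately show "poly (trace_form q n F (pcompose k R ^ (q - 2)) H) (poly (trace_form q n f k h) x) = x"
    for x by (intro trace_form_left_inverse[OF h k H(1)] R)
qed

end

theorem theorem3p2:
  fixes p q n m :: nat and h f k :: "'a::{field,finite} poly"
  assumes "prime p" and "m > 0" and "q = p ^ m" and "n > 0"
    and "card (UNIV :: 'a set) = q ^ n"
    and "coeffs_in (Fq q) h"
    and "\<forall>c\<in>Fq q. poly k c \<in> Fq q \<and> poly k c \<noteq> 0"
  defines "P \<equiv> pcompose f (trace_poly q n) + pcompose k (trace_poly q n) * lin_assoc q h"
    and "Q \<equiv> Tn q n f + k * smult (poly h 1) [:0, 1:]"
  shows "(bij (poly P) \<longleftrightarrow>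
            coprime h ((monom 1 n - 1) div [:-1, 1:]) \<and>
            bij_betw (poly Q) (Fq q) (Fq q))
       \<and> (bij (poly P) \<longrightarrow>
           (\<forall>R. coeffs_in (Fq q) R \<and>
                (\<forall>c\<in>Fq q. poly R (poly Q c) = c \<and> poly Q (poly R c) = c) \<longrightarrow>
             (p dvd n \<longrightarrow>
                (\<exists>!H. coeffs_in (Fq q) H \<and> (\<forall>i\<ge>n. coeff H i = 0) \<and>
                       (monom 1 n - 1) dvd (h * H - 1)) \<and>
                (\<forall>H F. coeffs_in (Fq q) H \<and> (\<forall>i\<ge>n. coeff H i = 0) \<and>
                       (monom 1 n - 1) dvd (h * H - 1) \<and>
                       (monom 1 q - [:0, 1:]) dvd
                         (F - (- (pcompose k R ^ (q - 2) *
                                  pcompose (lin_assoc q H) (pcompose f R)))) \<longrightarrow>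
                   (let P0 = pcompose F (trace_poly q n) +
                             pcompose (pcompose k R) (trace_poly q n) ^ (q - 2) * lin_assoc q H
                    in \<forall>x. poly P0 (poly P x) = x \<and> poly P (poly P0 x) = x)))
             \<and>
             (\<not> p dvd n \<longrightarrow>
                (\<exists>!H. coeffs_in (Fq q) H \<and> (\<forall>i\<ge>n - 1. coeff H i = 0) \<and>
                       ((monom 1 n - 1) div [:-1, 1:]) dvd (h * H - 1)) \<and>
                (\<forall>H F. coeffs_in (Fq q) H \<and> (\<forall>i\<ge>n - 1. coeff H i = 0) \<and>
                       ((monom 1 n - 1) div [:-1, 1:]) dvd (h * H - 1) \<and>
                       (let M = - (k ^ (q - 2) * pcompose (lin_assoc q H) f) +
                                smult ((1 - poly h 1 * poly H 1) / of_nat n) [:0, 1:]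
                        in (monom 1 q - [:0, 1:]) dvd (F - pcompose M R)) \<longrightarrow>
                   (let P0 = pcompose F (trace_poly q n) +
                             pcompose (pcompose k R) (trace_poly q n) ^ (q - 2) * lin_assoc q H
                    in \<forall>x. poly P0 (poly P x) = x \<and> poly P (poly P0 x) = x)))))"
proof -
  interpret finite_extension "TYPE('a)" p m q n
    using assms(1-5) by (rule finite_extensionI)
  note h = assms(6) and k = assms(7)
  have P: "P = trace_form q n f k h" and Q: "Q = trace_reduction q n f k h"
    by (simp_all add: P_def Q_def trace_form_def trace_reduction_def)
  have P0: "pcompose F (trace_poly q n) + pcompose (pcompose k R) (trace_poly q n) ^ (q - 2) * lin_assoc q H
      = trace_form q n F (pcompose k R ^ (q - 2)) H" for F R H
    by (simp add: trace_form_def pcompose_power_left)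
  have bij_iff: "bij (poly P) \<longleftrightarrow> coprime h (geom_poly n) \<and> bij_betw (poly Q) (Fq q) (Fq q)"
    unfolding P Q by (rule bij_trace_form_iff[OF h k])
  show ?thesis
  proof (intro conjI impI allI, goal_cases)
    case 1
    show ?case
      using bij_iff by (simp only: monom_minus_one_div)
  next
    case (2 R)
    then show ?case
      using bij_iff unique_mod_inverse_monom_minus_one[OF h] n_pos by blast
  next
    case (3 R H F)
    then show ?case
      using trace_form_inverse_mod_monom_minus_one[OF h k, of f R H F] unfolding P Q P0 Let_def by blast
  next
    case (4 R)
    then show ?case
      using bij_iff unique_mod_inverse_geom_poly[OF h _ n_pos] by (simp only: monom_minus_one_div)
  next
    case (5 R H F)
    then show ?case
      using trace_form_inverse_mod_geom_poly[OF h k, of f R H F]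
      unfolding P Q P0 Let_def monom_minus_one_div by blast
  qed
qed

end
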